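(* Let $\mathcal{S}\subset\mathbb{R}_{\ge0}$ be measurable with positive Lebesgue measure and let $\mathcal{G}$ be a convex class of probability distributions on $\mathbb{R}$ (i.e. $\lambda G_1+(1-\lambda)G_2\in\mathcal{G}$ for all $\lambda\in[0,1]$, $G_1,G_2\in\mathcal{G}$). Then $\mathrm{Tilt}[\mathcal{G}]=\{\mathrm{Tilt}[G]:G\in\mathcal{G}\}$ is also a convex class of probability distributions.
   Context: With $\varphi^{\mathrm{fold}}(z;\mu)=\varphi(z;\mu)+\varphi(-z;\mu)$, where $\varphi(z;\mu)$ is the $\mathrm{N}(\mu,1)$ density, and $\Phi(\mathcal{S};\mu)=\int_{\mathcal{S}}\varphi^{\mathrm{fold}}(z;\mu)dz$, the tilting of a prior $G$ is $\mathrm{Tilt}[G](d\mu)=\frac{\Phi(\mathcal{S};\mu)G(d\mu)}{\int\Phi(\mathcal{S};\mu')G(d\mu')}$. *)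

theory Defs
  imports "HOL-Probability.Probability"
begin

definition phi_fold :: "real \<Rightarrow> real \<Rightarrow> real" where
  "phi_fold z \<mu> = normal_density \<mu> 1 z + normal_density \<mu> 1 (- z)"

definition Phi_sel :: "real set \<Rightarrow> real \<Rightarrow> real" where
  "Phi_sel S \<mu> = (LINT z:S|lborel. phi_fold z \<mu>)"

definition prob_dist :: "real measure \<Rightarrow> bool" where
  "prob_dist G \<longleftrightarrow> prob_space G \<and> sets G = sets borel"

definition mix :: "real \<Rightarrow> real measure \<Rightarrow> real measure \<Rightarrow> real measure" where
  "mix t G1 G2 = measure_of UNIV (sets borel)
     (\<lambda>A. ennreal t * emeasure G1 A + ennreal (1 - t) * emeasure G2 A)"

definition convex_class :: "real measure set \<Rightarrow> bool" where
  "convex_class \<G> \<longleftrightarrow> (\<forall>t\<in>{0..1}. \<forall>G1\<in>\<G>. \<forall>G2\<in>\<G>. mix t G1 G2 \<in> \<G>)"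

definition Tilt :: "real set \<Rightarrow> real measure \<Rightarrow> real measure" where
  "Tilt S G = density G (\<lambda>\<mu>. ennreal (Phi_sel S \<mu> / (\<integral>\<mu>'. Phi_sel S \<mu>' \<partial>G)))"

end

theory Submission
  imports Defs
begin

text \<open>Tilting reweights a prior by the selection probability \<open>\<Phi>(\<S>;\<mu>)\<close>, a bounded weight that is
  strictly positive because \<open>\<S>\<close> has positive Lebesgue measure, and normalises by its mean
  \<open>c\<^sub>G = \<integral>\<Phi>(\<S>;\<mu>) dG(\<mu>)\<close>. The mean is affine in \<open>G\<close>, so a mixture of tilts is again a tilt:
  \<open>t Tilt[G\<^sub>1] + (1 - t) Tilt[G\<^sub>2] = Tilt[s G\<^sub>1 + (1 - s) G\<^sub>2]\<close> with
  \<open>s = t c\<^sub>2 / (t c\<^sub>2 + (1 - t) c\<^sub>1)\<close>.\<close>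

lemma set_integral_pos:
  fixes f :: "'a \<Rightarrow> real"
  assumes A: "A \<in> sets M" "emeasure M A > 0"
    and f: "set_integrable M A f" "\<And>x. x \<in> A \<Longrightarrow> 0 < f x"
  shows "(LINT x:A|M. f x) > 0"
proof -
  let ?g = "\<lambda>x. indicator A x * f x"
  have g: "integrable M ?g" and g_nonneg: "AE x in M. 0 \<le> ?g x"
    using f by (auto simp: set_integrable_def indicator_def less_imp_le)
  have "(LINT x:A|M. f x) \<noteq> 0"
  proof
    assume "(LINT x:A|M. f x) = 0"
    then have "AE x in M. ?g x = 0"
      using integral_nonneg_eq_0_iff_AE[OF g g_nonneg] by (simp add: set_lebesgue_integral_def)
    then have "AE x in M. x \<notin> A"
      by eventually_elim (use f(2) in \<open>fastforce simp: indicator_def\<close>)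
    moreover have "{x \<in> space M. \<not> x \<notin> A} = A"
      using sets.sets_into_space[OF A(1)] by auto
    ultimately show False
      using A by (simp add: AE_iff_measurable[OF A(1)])
  qed
  moreover have "(LINT x:A|M. f x) \<ge> 0"
    using integral_nonneg_AE[OF g_nonneg] by (simp add: set_lebesgue_integral_def)
  ultimately show ?thesis by simp
qed

lemma sets_mix[simp, measurable_cong]: "sets (mix t G1 G2) = sets borel"
  unfolding mix_def using sets.sigma_sets_eq[of borel] by (simp add: sets_measure_of)

lemma emeasure_mix:
  assumes "sets G1 = sets borel" "sets G2 = sets borel" "A \<in> sets borel"
  shows "emeasure (mix t G1 G2) A = ennreal t * emeasure G1 A + ennreal (1 - t) * emeasure G2 A"
  unfolding mix_def
proof (rule emeasure_measure_of_sigma[OF _ _ _ assms(3)])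
  show "sigma_algebra UNIV (sets borel)"
    using sets.sigma_algebra_axioms[of borel] by simp
  show "positive (sets borel) (\<lambda>A. ennreal t * emeasure G1 A + ennreal (1 - t) * emeasure G2 A)"
    by (simp add: positive_def)
  show "countably_additive (sets borel)
      (\<lambda>A. ennreal t * emeasure G1 A + ennreal (1 - t) * emeasure G2 A)"
    unfolding countably_additive_def
  proof (intro allI impI)
    fix F :: "nat \<Rightarrow> real set"
    assume F: "range F \<subseteq> sets borel" "disjoint_family F" "\<Union> (range F) \<in> sets borel"
    have "(\<Sum>i. emeasure G (F i)) = emeasure G (\<Union> (range F))" if "sets G = sets borel" for G
      using F that by (intro suminf_emeasure) auto
    then show "(\<Sum>i. ennreal t * emeasure G1 (F i) + ennreal (1 - t) * emeasure G2 (F i)) =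
        ennreal t * emeasure G1 (\<Union> (range F)) + ennreal (1 - t) * emeasure G2 (\<Union> (range F))"
      using assms by (simp add: suminf_add[OF summableI summableI, symmetric])
  qed
qed

lemma nn_integral_mix:
  assumes sets_G1[measurable_cong]: "sets G1 = sets borel"
    and sets_G2[measurable_cong]: "sets G2 = sets borel"
    and f: "f \<in> borel_measurable borel"
  shows "(\<integral>\<^sup>+x. f x \<partial>mix t G1 G2) =
    ennreal t * (\<integral>\<^sup>+x. f x \<partial>G1) + ennreal (1 - t) * (\<integral>\<^sup>+x. f x \<partial>G2)"
  using f
proof induction
  case (cong f g)
  have "(\<integral>\<^sup>+x. f x \<partial>G) = (\<integral>\<^sup>+x. g x \<partial>G)" if "sets G = sets borel" for G
    using cong(3) sets_eq_imp_space_eq[OF that] by (intro nn_integral_cong) simp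
  then show ?case using cong(4) assms by (metis sets_mix)
next
  case (set A)
  then show ?case using assms by (simp add: emeasure_mix)
next
  case (mult u c)
  then show ?case
    by (simp add: nn_integral_cmult distrib_left mult.left_commute)
next
  case (add u v)
  then show ?case
    by (simp add: nn_integral_add algebra_simps)
next
  case (seq U)
  have mono: "incseq (\<lambda>i. ennreal r * integral\<^sup>N G (U i))" for r G
    using seq(3) by (auto intro!: mult_left_mono nn_integral_mono simp: incseq_def le_fun_def)
  have "(\<integral>\<^sup>+x. (SUP i. U i) x \<partial>mix t G1 G2) = (SUP i. integral\<^sup>N (mix t G1 G2) (U i))"
    using seq by (simp add: nn_integral_monotone_convergence_SUP image_comp)
  also have "\<dots> = (SUP i. ennreal t * integral\<^sup>N G1 (U i)) + (SUP i. ennreal (1 - t) * integral\<^sup>N G2 (U i))"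
    by (subst ennreal_SUP_add[OF mono mono, symmetric]) (simp add: seq)
  also have "\<dots> =
      ennreal t * (\<integral>\<^sup>+x. (SUP i. U i) x \<partial>G1) + ennreal (1 - t) * (\<integral>\<^sup>+x. (SUP i. U i) x \<partial>G2)"
    using seq by (simp add: nn_integral_monotone_convergence_SUP image_comp SUP_mult_left_ennreal)
  finally show ?case .
qed

lemma density_mix:
  assumes "sets G1 = sets borel" "sets G2 = sets borel" "f \<in> borel_measurable borel"
  shows "density (mix t G1 G2) f = mix t (density G1 f) (density G2 f)"
proof (rule measure_eqI)
  fix A assume "A \<in> sets (density (mix t G1 G2) f)"
  then have [measurable]: "A \<in> sets borel" by simp
  show "emeasure (density (mix t G1 G2) f) A = emeasure (mix t (density G1 f) (density G2 f)) A"
    using assms by (simp add: emeasure_density emeasure_mix nn_integral_mix cong: measurable_cong_sets)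
qed simp

lemma has_bochner_integral_mix:
  fixes w :: "real \<Rightarrow> real"
  assumes "sets G1 = sets borel" "sets G2 = sets borel" "integrable G1 w" "integrable G2 w"
    and "\<And>x. 0 \<le> w x" "t \<in> {0..1}"
  shows "has_bochner_integral (mix t G1 G2) w (t * (\<integral>x. w x \<partial>G1) + (1 - t) * (\<integral>x. w x \<partial>G2))"
proof (rule has_bochner_integral_nn_integral)
  have w: "w \<in> borel_measurable borel"
    using assms(1,3) by (simp cong: measurable_cong_sets)
  have "(\<integral>\<^sup>+x. w x \<partial>G) = ennreal (\<integral>x. w x \<partial>G)" if "integrable G w" for G
    using that assms(5) by (intro nn_integral_eq_integral) auto
  then show "(\<integral>\<^sup>+x. w x \<partial>mix t G1 G2) =
      ennreal (t * (\<integral>x. w x \<partial>G1) + (1 - t) * (\<integral>x. w x \<partial>G2))"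
    using assms w by (simp add: nn_integral_mix ennreal_mult ennreal_plus integral_nonneg)
  show "w \<in> borel_measurable (mix t G1 G2)"
    using w by simp
qed (use assms in \<open>auto intro!: add_nonneg_nonneg integral_nonneg\<close>)

definition reweight :: "'a measure \<Rightarrow> ('a \<Rightarrow> real) \<Rightarrow> 'a measure" where
  "reweight M w = density M (\<lambda>x. ennreal (w x / (\<integral>y. w y \<partial>M)))"

lemma sets_reweight[simp, measurable_cong]: "sets (reweight M w) = sets M"
  by (simp add: reweight_def)

lemma emeasure_reweight:
  assumes "w \<in> borel_measurable M" "\<And>x. 0 \<le> w x" "A \<in> sets M"
  shows "emeasure (reweight M w) A = ennreal (1 / (\<integral>y. w y \<partial>M)) * emeasure (density M w) A"
proof -
  have "ennreal (w x / (\<integral>y. w y \<partial>M)) * indicator A x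
      = ennreal (1 / (\<integral>y. w y \<partial>M)) * (ennreal (w x) * indicator A x)" for x
    using ennreal_mult'[OF assms(2)[of x], of "1 / (\<integral>y. w y \<partial>M)"] by (simp add: ac_simps)
  then show ?thesis
    using assms by (simp add: reweight_def emeasure_density nn_integral_cmult[symmetric])
qed

lemma prob_space_reweight:
  assumes "integrable M w" "\<And>x. 0 \<le> w x" "(\<integral>x. w x \<partial>M) \<noteq> 0"
  shows "prob_space (reweight M w)"
proof (rule prob_spaceI)
  have "emeasure (reweight M w) (space (reweight M w)) =
      (\<integral>\<^sup>+x. ennreal (w x / (\<integral>y. w y \<partial>M)) \<partial>M)"
    using assms(1) unfolding reweight_def
    by (subst emeasure_density) (auto intro!: nn_integral_cong)
  also have "\<dots> = ennreal (\<integral>x. w x / (\<integral>y. w y \<partial>M) \<partial>M)"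
    using assms by (intro nn_integral_eq_integral) (auto intro: integral_nonneg)
  also have "\<dots> = 1"
    using assms(3) by simp
  finally show "emeasure (reweight M w) (space (reweight M w)) = 1" .
qed

lemma mix_reweight:
  fixes w :: "real \<Rightarrow> real"
  assumes sets_G1: "sets G1 = sets borel" and sets_G2: "sets G2 = sets borel"
    and w: "integrable G1 w" "integrable G2 w" "\<And>x. 0 \<le> w x"
    and pos1: "0 < (\<integral>x. w x \<partial>G1)" and pos2: "0 < (\<integral>x. w x \<partial>G2)"
    and t: "t \<in> {0..1}"
  obtains s where "s \<in> {0..1}" "mix t (reweight G1 w) (reweight G2 w) = reweight (mix s G1 G2) w"
proof -
  define c1 where "c1 = (\<integral>x. w x \<partial>G1)"
  define c2 where "c2 = (\<integral>x. w x \<partial>G2)"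
  have "0 < c1" "0 < c2"
    using pos1 pos2 by (simp_all add: c1_def c2_def)
  define d where "d = t * c2 + (1 - t) * c1"
  \<comment> \<open>\<open>s\<close> is chosen so that \<open>t / c1 = s / c\<close> and \<open>(1 - t) / c2 = (1 - s) / c\<close>, where
    \<open>c = s c1 + (1 - s) c2 = c1 c2 / d\<close> is the mean of \<open>w\<close> under the mixture.\<close>
  define s where "s = t * c2 / d"
  have "0 < d"
    using t \<open>0 < c1\<close> \<open>0 < c2\<close> unfolding d_def
    by (cases "t = 0") (auto intro!: add_pos_nonneg)
  then have s: "s \<in> {0..1}" and one_minus_s: "1 - s = (1 - t) * c1 / d"
    using t \<open>0 < c1\<close> \<open>0 < c2\<close> by (auto simp: s_def d_def field_simps)
  define c where "c = (\<integral>x. w x \<partial>mix s G1 G2)"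
  have "c = s * c1 + (1 - s) * c2"
    using has_bochner_integral_mix[OF sets_G1 sets_G2 w s]
    by (simp add: c_def c1_def c2_def has_bochner_integral_iff)
  then have "c = c1 * c2 / d"
    using \<open>0 < d\<close> by (simp add: one_minus_s s_def field_simps) (simp add: d_def algebra_simps)
  then have "0 < c" and "t * (1 / c1) = (1 / c) * s" and "(1 - t) * (1 / c2) = (1 / c) * (1 - s)"
    using \<open>0 < d\<close> \<open>0 < c1\<close> \<open>0 < c2\<close> unfolding one_minus_s by (auto simp: s_def)
  then have weight1: "ennreal t * ennreal (1 / c1) = ennreal (1 / c) * ennreal s"
    and weight2: "ennreal (1 - t) * ennreal (1 / c2) = ennreal (1 / c) * ennreal (1 - s)"
    using t s \<open>0 < c1\<close> \<open>0 < c2\<close> by (auto simp flip: ennreal_mult)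
  have w_borel: "w \<in> borel_measurable borel"
    using w(1) sets_G1 by (simp cong: measurable_cong_sets)
  have "mix t (reweight G1 w) (reweight G2 w) = reweight (mix s G1 G2) w"
  proof (rule measure_eqI)
    fix A assume "A \<in> sets (mix t (reweight G1 w) (reweight G2 w))"
    then have A: "A \<in> sets borel" by simp
    show "emeasure (mix t (reweight G1 w) (reweight G2 w)) A = emeasure (reweight (mix s G1 G2) w) A"
      using A sets_G1 sets_G2 w_borel w(3)
      by (simp add: emeasure_mix emeasure_reweight density_mix c_def[symmetric] c1_def[symmetric]
          c2_def[symmetric] distrib_left mult.assoc[symmetric] weight1 weight2
          cong: measurable_cong_sets)
  qed simp
  with s show ?thesis by (rule that)
qed

lemma phi_fold_pos: "0 < phi_fold z \<mu>"
  unfolding phi_fold_def by (intro add_pos_pos normal_density_pos) auto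

lemma integrable_phi_fold: "integrable lborel (\<lambda>z. phi_fold z \<mu>)"
  and integral_phi_fold: "(\<integral>z. phi_fold z \<mu> \<partial>lborel) = 2"
proof -
  have "phi_fold z \<mu> = normal_density \<mu> 1 z + normal_density (- \<mu>) 1 z" for z
    by (simp add: phi_fold_def normal_density_def power2_commute add.commute)
  then show "integrable lborel (\<lambda>z. phi_fold z \<mu>)" "(\<integral>z. phi_fold z \<mu> \<partial>lborel) = 2"
    by auto
qed

lemma Phi_sel_measurable[measurable]:
  assumes [measurable]: "S \<in> sets borel"
  shows "Phi_sel S \<in> borel_measurable borel"
  unfolding Phi_sel_def set_lebesgue_integral_def phi_fold_def normal_density_def
  by measurable

lemma Phi_sel_le_2: "Phi_sel S \<mu> \<le> 2"
proof -
  have "Phi_sel S \<mu> \<le> (\<integral>z. phi_fold z \<mu> \<partial>lborel)"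
    unfolding Phi_sel_def set_lebesgue_integral_def
    by (rule integral_mono') (auto simp: integrable_phi_fold indicator_def less_imp_le[OF phi_fold_pos])
  then show ?thesis by (simp add: integral_phi_fold)
qed

lemma Phi_sel_pos:
  assumes "S \<in> sets lborel" "emeasure lborel S > 0"
  shows "0 < Phi_sel S \<mu>"
  unfolding Phi_sel_def
proof (rule set_integral_pos)
  show "set_integrable lborel S (\<lambda>z. phi_fold z \<mu>)"
    using integrable_real_mult_indicator[OF assms(1) integrable_phi_fold]
    by (simp add: set_integrable_def mult.commute)
qed (use assms phi_fold_pos in auto)

lemma Phi_sel_nonneg: "0 \<le> Phi_sel S \<mu>"
  unfolding Phi_sel_def set_lebesgue_integral_def
  by (intro integral_nonneg_AE) (simp add: less_imp_le[OF phi_fold_pos])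

lemma integrable_Phi_sel:
  assumes "S \<in> sets lborel" "prob_dist G"
  shows "integrable G (Phi_sel S)"
proof -
  interpret prob_space G
    using assms(2) by (simp add: prob_dist_def)
  show ?thesis
    using assms Phi_sel_le_2 Phi_sel_nonneg
    by (intro integrable_const_bound[where B = 2]) (auto simp: prob_dist_def cong: measurable_cong_sets)
qed

lemma mean_Phi_sel_pos:
  assumes "S \<in> sets lborel" "emeasure lborel S > 0" "prob_dist G"
  shows "0 < (\<integral>\<mu>. Phi_sel S \<mu> \<partial>G)"
proof -
  interpret prob_space G
    using assms(3) by (simp add: prob_dist_def)
  show ?thesis
    using integral_less_AE_space[of "\<lambda>_. 0" "Phi_sel S"] assms Phi_sel_pos
    by (simp add: integrable_Phi_sel emeasure_space_1)
qed

lemma Tilt_eq_reweight: "Tilt S G = reweight G (Phi_sel S)"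
  unfolding Tilt_def reweight_def ..

lemma prob_dist_Tilt:
  assumes "S \<in> sets lborel" "emeasure lborel S > 0" "prob_dist G"
  shows "prob_dist (Tilt S G)"
  using prob_space_reweight[OF integrable_Phi_sel Phi_sel_nonneg] mean_Phi_sel_pos[OF assms] assms
  by (simp add: prob_dist_def Tilt_eq_reweight)

lemma mix_Tilt:
  assumes "S \<in> sets lborel" "emeasure lborel S > 0" "prob_dist G1" "prob_dist G2" "t \<in> {0..1}"
  obtains s where "s \<in> {0..1}" "mix t (Tilt S G1) (Tilt S G2) = Tilt S (mix s G1 G2)"
proof -
  have "sets G1 = sets borel" "sets G2 = sets borel"
    using assms(3,4) by (simp_all add: prob_dist_def)
  then show ?thesis
    using mix_reweight[OF _ _ integrable_Phi_sel[OF assms(1,3)] integrable_Phi_sel[OF assms(1,4)]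
        Phi_sel_nonneg mean_Phi_sel_pos[OF assms(1-3)] mean_Phi_sel_pos[OF assms(1,2,4)] assms(5)] that
    unfolding Tilt_eq_reweight by blast
qed

theorem proposition2:
  fixes S :: "real set" and \<G> :: "real measure set"
  assumes "S \<in> sets lborel" and "S \<subseteq> {0..}" and "emeasure lborel S > 0"
    and "\<forall>G\<in>\<G>. prob_dist G" and "convex_class \<G>"
  shows "(\<forall>H\<in>Tilt S ` \<G>. prob_dist H) \<and> convex_class (Tilt S ` \<G>)"
proof
  show "\<forall>H\<in>Tilt S ` \<G>. prob_dist H"
    using prob_dist_Tilt[OF assms(1,3)] assms(4) by blast
  show "convex_class (Tilt S ` \<G>)"
    unfolding convex_class_def
  proof (intro ballI)
    fix t :: real and H1 H2
    assume t: "t \<in> {0..1}" and "H1 \<in> Tilt S ` \<G>" "H2 \<in> Tilt S ` \<G>"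
    then obtain G1 G2 where G: "G1 \<in> \<G>" "G2 \<in> \<G>" and H: "H1 = Tilt S G1" "H2 = Tilt S G2"
      by blast
    obtain s where "s \<in> {0..1}" "mix t H1 H2 = Tilt S (mix s G1 G2)"
      using mix_Tilt[OF assms(1,3) _ _ t] G assms(4) unfolding H by blast
    with assms(5) G show "mix t H1 H2 \<in> Tilt S ` \<G>"
      unfolding convex_class_def by blast
  qed
qed

end
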